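(* Let $L_1,\dots,L_n\subset\mathbb{C}^2$ be $n\ge3$ distinct complex lines through the origin, and let $a_1,\dots,a_n\in\mathbb{R}\setminus\{0\}$ all have the same sign. Then there exists a Dunkl inner product adapted to $(L_i,a_i)$ if and only if $$|a_j|<\sum_{i\ne j}|a_i|\quad\text{for all } j.$$ Moreover, whenever this inequality holds, the Dunkl inner product is unique up to multiplication by a positive scalar.
   Context: A Dunkl inner product adapted to $(L_i,a_i)$ is a positive definite Hermitian inner product $\langle\cdot,\cdot\rangle_H$ on $\mathbb{C}^2$ such that $\sum_i a_i P_i=c\cdot\mathrm{Id}$ for some $c\in\mathbb{C}$, where $P_i$ is the orthogonal projection onto the $\langle\cdot,\cdot\rangle_H$-orthogonal complement $L_i^{\perp}$ of $L_i$. *)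

theory Defs
  imports "HOL-Analysis.Analysis"
begin

definition complex_line :: "(complex^2) set \<Rightarrow> bool" where
  "complex_line L \<longleftrightarrow> (\<exists>v. v \<noteq> 0 \<and> L = range (\<lambda>c::complex. c *s v))"

definition herm_ip :: "(complex^2 \<Rightarrow> complex^2 \<Rightarrow> complex) \<Rightarrow> bool" where
  "herm_ip h \<longleftrightarrow>
     (\<forall>x y z. h (x + y) z = h x z + h y z) \<and>
     (\<forall>(c::complex) x y. h (c *s x) y = c * h x y) \<and>
     (\<forall>x y. h y x = cnj (h x y)) \<and>
     (\<forall>x. x \<noteq> 0 \<longrightarrow> Re (h x x) > 0)"

definition orth_compl :: "(complex^2 \<Rightarrow> complex^2 \<Rightarrow> complex) \<Rightarrow> (complex^2) set \<Rightarrow> (complex^2) set" where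
  "orth_compl h L = {x. \<forall>y\<in>L. h x y = 0}"

definition orth_proj :: "(complex^2 \<Rightarrow> complex^2 \<Rightarrow> complex) \<Rightarrow> (complex^2) set \<Rightarrow> complex^2 \<Rightarrow> complex^2" where
  "orth_proj h W x = (THE p. p \<in> W \<and> (\<forall>w\<in>W. h (x - p) w = 0))"

definition dunkl_adapted :: "nat \<Rightarrow> (nat \<Rightarrow> (complex^2) set) \<Rightarrow> (nat \<Rightarrow> real)
     \<Rightarrow> (complex^2 \<Rightarrow> complex^2 \<Rightarrow> complex) \<Rightarrow> bool" where
  "dunkl_adapted n L a h \<longleftrightarrow> herm_ip h \<and>
     (\<exists>c::complex. \<forall>x. (\<Sum>i<n. complex_of_real (a i) *s orth_proj h (orth_compl h (L i)) x) = c *s x)"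

end

theory Submission
  imports Defs
begin

text \<open>
  Write \<open>L\<^sub>i = C v\<^sub>i\<close> and \<open>b\<^sub>i = |a\<^sub>i|\<close>. The projection onto \<open>L\<^sub>i\<close>-perp is the identity minus the
  orthogonal projection onto \<open>L\<^sub>i\<close>, so \<open>h\<close> is a Dunkl inner product iff \<open>T = sum b\<^sub>i proj\<^sub>i\<close> is
  scalar. Evaluating \<open>h (T z) z\<close> at two nonzero vectors \<open>u, w\<close> gives the balance identity
  \<open>sum b\<^sub>i (|h v\<^sub>i u|^2 / h u u - |h v\<^sub>i w|^2 / h w w) / h v\<^sub>i v\<^sub>i = 0\<close>.

  Taking \<open>u = v\<^sub>j\<close> and \<open>w\<close> orthogonal to \<open>u\<close> turns it into \<open>b\<^sub>j < sum_{i /= j} b\<^sub>i\<close>; the inequality is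
  strict because at most one of the other lines is \<open>u\<close>-perp. For uniqueness, two Hermitian forms on
  \<open>C^2\<close> have a common orthogonal basis \<open>e, f\<close>; written in it, the balance identity is strictly
  monotone in the ratio \<open>h f f / h e e\<close>, so two Dunkl products have the same ratio and are
  proportional.

  For existence, the Hermitian forms of determinant 1 are parametrised by \<open>x \<in> R^3\<close> (hyperbolic
  3-space), with \<open>h\<^sub>x p p = |p|^2 sqrt (1 + |x|^2) + <x, hopf p>\<close>. The function
  \<open>F x = sum b\<^sub>i log (h\<^sub>x v\<^sub>i v\<^sub>i)\<close> is proper when the strict inequalities hold, and at a minimum its
  vanishing gradient says that \<open>sum b\<^sub>i v\<^sub>i v\<^sub>i^* / h\<^sub>x v\<^sub>i v\<^sub>i\<close> is a multiple of the inverse of the matrix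
  of \<open>h\<^sub>x\<close>, i.e. that \<open>T\<close> is scalar for \<open>h\<^sub>x\<close>.
\<close>

section \<open>Hermitian forms on C^2\<close>

locale hermitian_form =
  fixes h :: "complex^2 \<Rightarrow> complex^2 \<Rightarrow> complex"
  assumes herm_ip: "herm_ip h"
begin

lemma add_left: "h (x + y) z = h x z + h y z"
  using herm_ip unfolding herm_ip_def by blast

lemma smult_left: "h (c *s x) y = c * h x y"
  using herm_ip unfolding herm_ip_def by blast

lemma cnj_swap: "h y x = cnj (h x y)"
  using herm_ip unfolding herm_ip_def by blast

lemma self_pos: "x \<noteq> 0 \<Longrightarrow> 0 < Re (h x x)"
  using herm_ip unfolding herm_ip_def by blast

lemma add_right: "h x (y + z) = h x y + h x z"
  by (metis add_left cnj_swap complex_cnj_add)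

lemma smult_right: "h x (c *s y) = cnj c * h x y"
  by (metis smult_left cnj_swap complex_cnj_mult complex_cnj_cnj)

lemma minus_left: "h (- x) y = - h x y"
  using smult_left[of "- 1" x y] by (simp add: vector_sneg_minus1[symmetric])

lemma diff_left: "h (x - y) z = h x z - h y z"
  using add_left[of x "- y" z] minus_left[of y z] by simp

lemma zero_left: "h 0 y = 0"
  using smult_left[of 0 0 y] by simp

lemma sum_left: "h (sum f S) y = (\<Sum>i\<in>S. h (f i) y)"
  by (induction S rule: infinite_finite_induct) (simp_all add: zero_left add_left)

lemma orth_sym: "h x y = 0 \<longleftrightarrow> h y x = 0"
  by (metis cnj_swap complex_cnj_zero_iff)

lemma cmod_swap: "cmod (h x y) = cmod (h y x)"
  by (metis cnj_swap complex_mod_cnj)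

lemma self_real: "h x x = of_real (Re (h x x))"
  using cnj_swap[of x x] by (simp add: complex_eq_iff)

lemma self_eq_0_iff: "h x x = 0 \<longleftrightarrow> x = 0"
  using self_pos[of x] zero_left[of 0] by force

lemma expand_left: "h y z = y$1 * h (axis 1 1) z + y$2 * h (axis 2 1) z"
proof -
  have "y$1 *s axis 1 1 + y$2 *s axis 2 1 = y"
    by (simp add: vec_eq_iff forall_2 axis_def)
  then have "h y z = h (y$1 *s axis 1 1 + y$2 *s axis 2 1) z"
    by simp
  then show ?thesis
    by (simp add: add_left smult_left)
qed

lemma expand_right: "h y z = cnj (z$1) * h y (axis 1 1) + cnj (z$2) * h y (axis 2 1)"
proof -
  have "h y z = cnj (h z y)"
    by (rule cnj_swap)
  also have "\<dots> = cnj (z$1 * h (axis 1 1) y + z$2 * h (axis 2 1) y)"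
    by (simp only: expand_left[of z y])
  also have "\<dots> = cnj (z$1) * h y (axis 1 1) + cnj (z$2) * h y (axis 2 1)"
    by (simp add: cnj_swap[of y "axis 1 1"] cnj_swap[of y "axis 2 1"])
  finally show ?thesis .
qed

end

definition perp :: "(complex^2 \<Rightarrow> complex^2 \<Rightarrow> complex) \<Rightarrow> complex^2 \<Rightarrow> complex^2" where
  "perp h u = h (axis 2 1) u *s axis 1 1 - h (axis 1 1) u *s axis 2 1"

definition line_proj :: "(complex^2 \<Rightarrow> complex^2 \<Rightarrow> complex) \<Rightarrow> complex^2 \<Rightarrow> complex^2 \<Rightarrow> complex^2" where
  "line_proj h v x = (h x v / h v v) *s v"

context hermitian_form
begin

lemma perp_orth: "h (perp h u) u = 0"
  by (simp add: perp_def diff_left smult_left mult.commute)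

lemma perp_nonzero:
  assumes "u \<noteq> 0"
  shows "perp h u \<noteq> 0"
proof
  assume "perp h u = 0"
  then have "h (axis 1 1) u = 0" "h (axis 2 1) u = 0"
    by (auto simp: perp_def vec_eq_iff forall_2 axis_def)
  then have "h u u = 0"
    using expand_left[of u u] by simp
  with assms show False
    by (simp add: self_eq_0_iff)
qed

lemma orth_multiple_perp:
  assumes u: "u \<noteq> 0" and r: "h r u = 0"
  shows "\<exists>l. r = l *s perp h u"
proof -
  define c1 where "c1 = h (axis 1 1) u"
  define c2 where "c2 = h (axis 2 1) u"
  have r_eq: "r$1 * c1 + r$2 * c2 = 0"
    using r expand_left[of r u] by (simp add: c1_def c2_def)
  have "h u u \<noteq> 0"
    using u by (simp add: self_eq_0_iff)
  then have nz: "c1 \<noteq> 0 \<or> c2 \<noteq> 0"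
    using expand_left[of u u] by (auto simp: c1_def c2_def)
  have perp_u: "perp h u = c2 *s axis 1 1 - c1 *s axis 2 1"
    by (simp add: perp_def c1_def c2_def)
  show ?thesis
  proof (cases "c1 = 0")
    case True
    with nz r_eq have "c2 \<noteq> 0" "r$2 = 0"
      by auto
    with True show ?thesis
      by (intro exI[of _ "r$1 / c2"]) (simp add: perp_u vec_eq_iff forall_2 axis_def)
  next
    case False
    with r_eq have "r$1 = - r$2 * c2 / c1"
      by (simp add: field_simps add_eq_0_iff)
    with False show ?thesis
      by (intro exI[of _ "- r$2 / c1"]) (simp add: perp_u vec_eq_iff forall_2 axis_def)
  qed
qed

lemma orth_collinear:
  assumes "u \<noteq> 0" "h x u = 0" "h y u = 0" "x \<noteq> 0"
  shows "\<exists>c. y = c *s x"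
proof -
  obtain l where l: "x = l *s perp h u"
    using orth_multiple_perp assms(1,2) by blast
  obtain m where m: "y = m *s perp h u"
    using orth_multiple_perp assms(1,3) by blast
  from l assms(4) have "l \<noteq> 0"
    by auto
  with l m have "y = (m / l) *s x"
    by (simp add: vector_smult_assoc)
  then show ?thesis ..
qed

lemma line_proj_inner_self: "h (line_proj h v z) z = of_real ((cmod (h v z))\<^sup>2 / Re (h v v))"
proof -
  have "h (line_proj h v z) z = cnj (h v z) * h v z / of_real (Re (h v v))"
    by (simp add: line_proj_def smult_left cnj_swap[of v z] flip: self_real)
  also have "\<dots> = of_real ((cmod (h v z))\<^sup>2) / of_real (Re (h v v))"
    using complex_norm_square[of "h v z"] by (simp add: mult.commute)
  finally show ?thesis
    by simp
qed

lemma orth_decomposition: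
  assumes u: "u \<noteq> 0" and w: "w \<noteq> 0" and uw: "h u w = 0"
  shows "y = line_proj h u y + line_proj h w y"
proof -
  define r where "r = y - line_proj h u y"
  have "h r u = 0"
    using u by (simp add: r_def line_proj_def diff_left smult_left self_eq_0_iff)
  moreover have "h w u = 0"
    using uw orth_sym by blast
  ultimately obtain c where c: "r = c *s w"
    using orth_collinear[OF u _ _ w] by blast
  have "h r w = h y w"
    using uw by (simp add: r_def line_proj_def diff_left smult_left)
  with c w have "c = h y w / h w w"
    by (simp add: smult_left self_eq_0_iff field_simps)
  with c have "r = line_proj h w y"
    by (simp add: line_proj_def)
  then show ?thesis
    by (metis add.commute diff_add_cancel r_def)
qed

lemma parseval:
  assumes "u \<noteq> 0" "w \<noteq> 0" "h u w = 0"
  shows "Re (h y y) = (cmod (h y u))\<^sup>2 / Re (h u u) + (cmod (h y w))\<^sup>2 / Re (h w w)"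
proof -
  have "h y y = h (line_proj h u y + line_proj h w y) y"
    by (metis orth_decomposition[OF assms])
  then have "h y y = of_real ((cmod (h u y))\<^sup>2 / Re (h u u) + (cmod (h w y))\<^sup>2 / Re (h w w))"
    by (simp add: add_left line_proj_inner_self)
  then show ?thesis
    by (simp add: cmod_swap[of u y] cmod_swap[of w y])
qed

lemma diagonal_expansion:
  assumes "h e f = 0"
  shows "h (\<alpha> *s e + \<beta> *s f) (\<gamma> *s e + \<delta> *s f) = \<alpha> * cnj \<gamma> * h e e + \<beta> * cnj \<delta> * h f f"
  using assms orth_sym[of e f] by (simp add: add_left add_right smult_left smult_right algebra_simps)

lemma orth_compl_span: "orth_compl h (range (\<lambda>c. c *s v)) = {x. h x v = 0}"
proof -
  have "(\<forall>y\<in>range (\<lambda>c. c *s v). h x y = 0) \<longleftrightarrow> h x v = 0" for x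
    by (metis (no_types, lifting) rangeE rangeI mult_zero_right smult_right vector_smult_lid)
  then show ?thesis
    by (auto simp: orth_compl_def)
qed

lemma orth_proj_compl_span:
  assumes v: "v \<noteq> 0"
  shows "orth_proj h (orth_compl h (range (\<lambda>c. c *s v))) x = x - line_proj h v x"
proof -
  define p where "p = x - line_proj h v x"
  have vv: "h v v \<noteq> 0"
    using v by (simp add: self_eq_0_iff)
  have p_orth: "h p v = 0"
    using vv by (simp add: p_def line_proj_def diff_left smult_left)
  have residual_orth: "h (x - p) w = 0" if "h w v = 0" for w
    using that orth_sym[of w v] by (simp add: p_def line_proj_def smult_left)
  show ?thesis
    unfolding orth_proj_def orth_compl_span p_def[symmetric]
  proof (rule the_equality)
    show "p \<in> {x. h x v = 0} \<and> (\<forall>w\<in>{x. h x v = 0}. h (x - p) w = 0)"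
      using p_orth residual_orth by auto
  next
    fix q
    assume q: "q \<in> {x. h x v = 0} \<and> (\<forall>w\<in>{x. h x v = 0}. h (x - q) w = 0)"
    have d: "h (q - p) v = 0"
      using q p_orth by (simp add: diff_left)
    have "h ((x - p) - (x - q)) (q - p) = 0"
      using q d residual_orth by (simp add: diff_left)
    then have "h (q - p) (q - p) = 0"
      by simp
    then show "q = p"
      by (simp add: self_eq_0_iff)
  qed
qed

end

section \<open>The Dunkl condition as a scalar sum of projections\<close>

definition proj_sum_scalar ::
    "nat \<Rightarrow> (nat \<Rightarrow> complex^2) \<Rightarrow> (nat \<Rightarrow> real) \<Rightarrow> (complex^2 \<Rightarrow> complex^2 \<Rightarrow> complex) \<Rightarrow> bool" where
  "proj_sum_scalar n v a h \<longleftrightarrow> (\<exists>d. \<forall>x. (\<Sum>i<n. of_real (a i) *s line_proj h (v i) x) = d *s x)"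

definition distinct_lines :: "nat \<Rightarrow> (nat \<Rightarrow> complex^2) \<Rightarrow> bool" where
  "distinct_lines n v \<longleftrightarrow>
     (\<forall>i<n. v i \<noteq> 0) \<and> (\<forall>i<n. \<forall>k<n. i \<noteq> k \<longrightarrow> (\<forall>c. v k \<noteq> c *s v i))"

lemma distinct_lines_nonzero: "distinct_lines n v \<Longrightarrow> i < n \<Longrightarrow> v i \<noteq> 0"
  by (simp add: distinct_lines_def)

lemma distinct_lines_not_collinear:
  assumes "distinct_lines n v" "i < n" "k < n" "i \<noteq> k" "v i = s *s x" "v k = t *s x"
  shows False
proof -
  have "s \<noteq> 0"
    using assms(1,2,5) distinct_lines_nonzero by fastforce
  with assms(5,6) have "v k = (t / s) *s v i"
    by (simp add: vector_smult_assoc)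
  with assms(1-4) show False
    by (auto simp: distinct_lines_def)
qed

lemma span_scaled:
  assumes "c \<noteq> 0"
  shows "range (\<lambda>d. d *s (c *s w)) = range (\<lambda>d::complex. d *s w)"
proof
  show "range (\<lambda>d. d *s (c *s w)) \<subseteq> range (\<lambda>d. d *s w)"
    by (auto simp: vector_smult_assoc)
  show "range (\<lambda>d. d *s w) \<subseteq> range (\<lambda>d. d *s (c *s w))"
  proof
    fix y
    assume "y \<in> range (\<lambda>d. d *s w)"
    then obtain d where "y = d *s w"
      by blast
    with assms have "y = (d / c) *s (c *s w)"
      by (simp add: vector_smult_assoc)
    then show "y \<in> range (\<lambda>d. d *s (c *s w))"
      by blast
  qed
qed

lemma distinct_lines_generators:
  assumes "\<forall>i<n. complex_line (L i)" "inj_on L {..<n}"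
  obtains v where "distinct_lines n v" "\<forall>i<n. L i = range (\<lambda>c. c *s v i)"
proof -
  obtain v where v: "\<forall>i<n. v i \<noteq> 0 \<and> L i = range (\<lambda>c. c *s v i)"
    using assms(1) unfolding complex_line_def by metis
  have "v k \<noteq> c *s v i" if "i < n" "k < n" "i \<noteq> k" for i k c
  proof
    assume vk: "v k = c *s v i"
    with v that have "c \<noteq> 0"
      by auto
    have "L k = range (\<lambda>d. d *s (c *s v i))"
      using v that vk by simp
    also have "\<dots> = L i"
      using v that span_scaled[OF \<open>c \<noteq> 0\<close>, of "v i"] by simp
    finally have "L k = L i" .
    with assms(2) that show False
      by (simp add: inj_on_def)
  qed
  with v have "distinct_lines n v"
    by (simp add: distinct_lines_def)
  with v that show thesis
    by blast
qed

lemma dunkl_adapted_iff_proj_sum_scalar: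
  assumes v: "\<forall>i<n. v i \<noteq> 0 \<and> L i = range (\<lambda>c. c *s v i)"
  shows "dunkl_adapted n L a h \<longleftrightarrow> herm_ip h \<and> proj_sum_scalar n v a h"
proof (cases "herm_ip h")
  case True
  interpret hermitian_form h
    using True by unfold_locales
  define A where "A = (\<Sum>i<n. of_real (a i) :: complex)"
  define G where "G x = (\<Sum>i<n. of_real (a i) *s line_proj h (v i) x)" for x
  have sum_eq: "(\<Sum>i<n. of_real (a i) *s orth_proj h (orth_compl h (L i)) x) = A *s x - G x" for x
  proof -
    have "(\<Sum>i<n. of_real (a i) *s orth_proj h (orth_compl h (L i)) x)
        = (\<Sum>i<n. of_real (a i) *s x - of_real (a i) *s line_proj h (v i) x)"
      by (rule sum.cong) (simp_all add: v orth_proj_compl_span vector_ssub_ldistrib)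
    also have "\<dots> = A *s x - G x"
      by (simp add: sum_subtractf G_def A_def vec_eq_iff sum_distrib_right)
    finally show ?thesis .
  qed
  have "(\<exists>c. \<forall>x. A *s x - G x = c *s x) \<longleftrightarrow> (\<exists>d. \<forall>x. G x = d *s x)"
  proof
    assume "\<exists>c. \<forall>x. A *s x - G x = c *s x"
    then obtain c where "\<And>x. A *s x - G x = c *s x"
      by blast
    then have "G x = (A - c) *s x" for x
      by (simp add: vector_sub_rdistrib algebra_simps)
    then show "\<exists>d. \<forall>x. G x = d *s x"
      by blast
  next
    assume "\<exists>d. \<forall>x. G x = d *s x"
    then obtain d where "\<And>x. G x = d *s x"
      by blast
    then have "A *s x - G x = (A - d) *s x" for x
      by (simp add: vector_sub_rdistrib)
    then show "\<exists>c. \<forall>x. A *s x - G x = c *s x"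
      by blast
  qed
  then show ?thesis
    using True by (simp add: dunkl_adapted_def proj_sum_scalar_def sum_eq G_def)
next
  case False
  then show ?thesis
    by (simp add: dunkl_adapted_def)
qed

lemma proj_sum_scalar_rescale:
  assumes "c \<noteq> 0" and "\<forall>i<n. b i = c * a i"
  shows "proj_sum_scalar n v b h \<longleftrightarrow> proj_sum_scalar n v a h"
proof -
  have b_sum: "(\<Sum>i<n. of_real (b i) *s line_proj h (v i) x)
      = of_real c *s (\<Sum>i<n. of_real (a i) *s line_proj h (v i) x)" for x
    using assms(2) by (simp add: vec_eq_iff sum_distrib_left mult.assoc)
  show ?thesis
  proof
    assume "proj_sum_scalar n v b h"
    then obtain d where "\<And>x. (\<Sum>i<n. of_real (b i) *s line_proj h (v i) x) = d *s x"
      by (auto simp: proj_sum_scalar_def)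
    moreover have "(\<Sum>i<n. of_real (a i) *s line_proj h (v i) x)
        = of_real (inverse c) *s (\<Sum>i<n. of_real (b i) *s line_proj h (v i) x)" for x
      using assms(1) by (simp add: b_sum vector_smult_assoc flip: of_real_mult)
    ultimately have "(\<Sum>i<n. of_real (a i) *s line_proj h (v i) x) = (of_real (inverse c) * d) *s x"
      for x
      by (simp add: vector_smult_assoc)
    then show "proj_sum_scalar n v a h"
      by (auto simp: proj_sum_scalar_def)
  next
    assume "proj_sum_scalar n v a h"
    then obtain d where "\<And>x. (\<Sum>i<n. of_real (a i) *s line_proj h (v i) x) = d *s x"
      by (auto simp: proj_sum_scalar_def)
    then have "(\<Sum>i<n. of_real (b i) *s line_proj h (v i) x) = (of_real c * d) *s x" for x
      by (simp add: b_sum vector_smult_assoc)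
    then show "proj_sum_scalar n v b h"
      by (auto simp: proj_sum_scalar_def)
  qed
qed

context hermitian_form
begin

lemma proj_sum_scalar_quadratic:
  assumes "proj_sum_scalar n v b h"
  obtains d where "\<And>z. (\<Sum>i<n. b i * (cmod (h (v i) z))\<^sup>2 / Re (h (v i) (v i))) = d * Re (h z z)"
proof -
  obtain c where c: "\<And>x. (\<Sum>i<n. of_real (b i) *s line_proj h (v i) x) = c *s x"
    using assms by (auto simp: proj_sum_scalar_def)
  define S where "S z = (\<Sum>i<n. b i * (cmod (h (v i) z))\<^sup>2 / Re (h (v i) (v i)))" for z
  have S_eq: "of_real (S z) = c * h z z" for z
  proof -
    have "c * h z z = h (\<Sum>i<n. of_real (b i) *s line_proj h (v i) z) z"
      by (simp add: c smult_left)
    also have "\<dots> = of_real (S z)"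
      by (simp add: S_def sum_left smult_left line_proj_inner_self)
    finally show ?thesis ..
  qed
  have "S z = Re c * Re (h z z)" for z
  proof -
    have "S z = Re (c * of_real (Re (h z z)))"
      by (metis S_eq Re_complex_of_real self_real)
    then show ?thesis
      by simp
  qed
  then show thesis
    by (rule that[unfolded S_def[symmetric]])
qed

lemma proj_sum_scalar_balance:
  assumes "proj_sum_scalar n v b h" "u \<noteq> 0" "w \<noteq> 0"
  shows "(\<Sum>i<n. b i * ((cmod (h (v i) u))\<^sup>2 / Re (h u u) - (cmod (h (v i) w))\<^sup>2 / Re (h w w))
            / Re (h (v i) (v i))) = 0"
proof -
  obtain d where d: "\<And>z. (\<Sum>i<n. b i * (cmod (h (v i) z))\<^sup>2 / Re (h (v i) (v i))) = d * Re (h z z)"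
    using proj_sum_scalar_quadratic[OF assms(1)] by blast
  have normalized: "(\<Sum>i<n. b i * ((cmod (h (v i) z))\<^sup>2 / Re (h z z)) / Re (h (v i) (v i))) = d"
    if "z \<noteq> 0" for z
  proof -
    have "(\<Sum>i<n. b i * ((cmod (h (v i) z))\<^sup>2 / Re (h z z)) / Re (h (v i) (v i)))
        = (\<Sum>i<n. b i * (cmod (h (v i) z))\<^sup>2 / Re (h (v i) (v i))) / Re (h z z)"
      by (simp add: sum_divide_distrib mult.commute)
    with d[of z] self_pos[OF that] show ?thesis
      by simp
  qed
  show ?thesis
    using normalized[OF assms(2)] normalized[OF assms(3)]
    by (simp add: diff_divide_distrib right_diff_distrib sum_subtractf)
qed

end

section \<open>Necessity of the inequalities\<close>

lemma obtain_two_others: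
  fixes n j :: nat
  assumes "3 \<le> n" "j < n"
  obtains i k where "i < n" "k < n" "i \<noteq> j" "k \<noteq> j" "i \<noteq> k"
proof -
  consider "j = 0" | "j = 1" | "2 \<le> j"
    by linarith
  then show thesis
    using assms that[of 1 2] that[of 0 2] that[of 0 1] by cases auto
qed

lemma (in hermitian_form) distinct_lines_not_orth:
  assumes dl: "distinct_lines n v" and "3 \<le> n" "j < n" and u: "u \<noteq> 0"
  obtains i where "i < n" "i \<noteq> j" "h (v i) u \<noteq> 0"
proof (rule ccontr)
  assume "\<not> thesis"
  with that have orth: "h (v i) u = 0" if "i < n" "i \<noteq> j" for i
    using that by blast
  obtain i k where ik: "i < n" "k < n" "i \<noteq> j" "k \<noteq> j" "i \<noteq> k"
    using obtain_two_others[OF \<open>3 \<le> n\<close> \<open>j < n\<close>] .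
  then obtain c where "v k = c *s v i"
    using orth_collinear[OF u orth orth distinct_lines_nonzero[OF dl]] by blast
  with dl ik show False
    by (auto simp: distinct_lines_def)
qed

lemma (in hermitian_form) proj_sum_scalar_imp_lt_sum_others:
  assumes ps: "proj_sum_scalar n v b h" and dl: "distinct_lines n v" and "3 \<le> n"
    and b: "\<forall>i<n. 0 < b i" and j: "j < n"
  shows "b j < (\<Sum>i\<in>{..<n} - {j}. b i)"
proof -
  define u where "u = v j"
  define w where "w = perp h u"
  have u: "u \<noteq> 0"
    using dl j by (simp add: distinct_lines_nonzero u_def)
  have w: "w \<noteq> 0" "h w u = 0"
    using perp_nonzero[OF u] perp_orth by (simp_all add: w_def)
  then have uw: "h u w = 0"
    using orth_sym by blast
  define P where "P i = (cmod (h (v i) u))\<^sup>2 / Re (h u u)" for i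
  define Q where "Q i = Re (h (v i) (v i))" for i
  have Q_pos: "0 < Q i" if "i < n" for i
    using self_pos distinct_lines_nonzero[OF dl that] by (simp add: Q_def)
  have R_eq: "(cmod (h (v i) w))\<^sup>2 / Re (h w w) = Q i - P i" for i
    using parseval[OF u w(1) uw, of "v i"] by (simp add: P_def Q_def)
  have "(\<Sum>i<n. b i * (P i - (Q i - P i)) / Q i) = 0"
    using proj_sum_scalar_balance[OF ps u w(1)] by (simp add: R_eq flip: P_def Q_def)
  moreover have "b i * (P i - (Q i - P i)) / Q i = 2 * (b i * P i / Q i) - b i" if "i < n" for i
    using Q_pos[OF that] by (simp add: field_simps)
  ultimately have total: "(\<Sum>i<n. b i) = 2 * (\<Sum>i<n. b i * P i / Q i)"
    by (simp add: sum_subtractf sum_distrib_left)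
  have "P j = Q j"
    using R_eq[of j] uw by (simp add: u_def[symmetric])
  then have split: "(\<Sum>i<n. b i * P i / Q i) = b j + (\<Sum>i\<in>{..<n} - {j}. b i * P i / Q i)"
    using j Q_pos[OF j] by (simp add: sum.remove)
  obtain i where "i < n" "i \<noteq> j" "h (v i) u \<noteq> 0"
    using distinct_lines_not_orth[OF dl \<open>3 \<le> n\<close> j u] .
  then have i: "i \<in> {..<n} - {j}" "0 < P i"
    using self_pos[OF u] by (simp_all add: P_def)
  have "0 < (\<Sum>i\<in>{..<n} - {j}. b i * P i / Q i)"
  proof (rule sum_pos2[OF _ i(1)])
    show "0 < b i * P i / Q i"
      using i b Q_pos by simp
    show "0 \<le> b k * P k / Q k" if "k \<in> {..<n} - {j}" for k
      using that b Q_pos[of k] self_pos[OF u]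
      by (intro divide_nonneg_pos mult_nonneg_nonneg) (auto simp: P_def less_imp_le)
  qed simp
  moreover have "(\<Sum>i<n. b i) = b j + (\<Sum>i\<in>{..<n} - {j}. b i)"
    using j by (simp add: sum.remove)
  ultimately show ?thesis
    using total split by linarith
qed

section \<open>Uniqueness\<close>

lemma complex_quadratic_root:
  fixes A B C :: complex
  assumes "A \<noteq> 0"
  obtains w where "A * w\<^sup>2 + B * w + C = 0"
proof -
  define s where "s = csqrt (B\<^sup>2 - 4 * A * C)"
  have "A * ((s - B) / (2 * A))\<^sup>2 + B * ((s - B) / (2 * A)) + C = (s\<^sup>2 - (B\<^sup>2 - 4 * A * C)) / (4 * A)"
    using assms by (simp add: field_simps power2_eq_square)
  also have "\<dots> = 0"
    by (simp add: s_def)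
  finally show thesis
    by (rule that)
qed

text \<open>Writing \<open>e = (1, cnj w)\<close>, the condition \<open>h2 (perp h1 e) e = 0\<close> is a quadratic equation in \<open>w\<close>.\<close>
lemma common_orthogonal_pair:
  assumes h1: "herm_ip h1" and h2: "herm_ip h2"
  obtains e f where "e \<noteq> 0" "f \<noteq> 0" "h1 e f = 0" "h2 e f = 0"
proof -
  interpret h1: hermitian_form h1
    using h1 by unfold_locales
  interpret h2: hermitian_form h2
    using h2 by unfold_locales
  define E1 E2 :: "complex^2" where "E1 = axis 1 1" and "E2 = axis 2 1"
  have perp_eq: "h2 (perp h1 e) e = h1 E2 e * h2 E1 e - h1 E1 e * h2 E2 e" for e
    by (simp add: perp_def E1_def E2_def h2.diff_left h2.smult_left)
  define A where "A = h1 E2 E2 * h2 E1 E2 - h1 E1 E2 * h2 E2 E2"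
  define B where "B = h1 E2 E1 * h2 E1 E2 + h1 E2 E2 * h2 E1 E1 - h1 E1 E1 * h2 E2 E2 - h1 E1 E2 * h2 E2 E1"
  define C where "C = h1 E2 E1 * h2 E1 E1 - h1 E1 E1 * h2 E2 E1"
  have "\<exists>e. e \<noteq> 0 \<and> h2 (perp h1 e) e = 0"
  proof (cases "A = 0")
    case True
    then show ?thesis
      by (intro exI[of _ E2]) (simp add: perp_eq A_def E2_def vec_eq_iff axis_def)
  next
    case False
    then obtain w where w: "A * w\<^sup>2 + B * w + C = 0"
      using complex_quadratic_root by blast
    define e where "e = E1 + cnj w *s E2"
    have "e \<noteq> 0"
      by (simp add: e_def vec_eq_iff E1_def E2_def axis_def exI[of _ 1])
    have h1e: "h1 E e = h1 E E1 + w * h1 E E2" and h2e: "h2 E e = h2 E E1 + w * h2 E E2" for E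
      by (simp_all add: e_def h1.add_right h1.smult_right h2.add_right h2.smult_right)
    have "h2 (perp h1 e) e = A * w\<^sup>2 + B * w + C"
      unfolding perp_eq unfolding h1e h2e A_def B_def C_def by algebra
    with \<open>e \<noteq> 0\<close> w show ?thesis
      by auto
  qed
  then obtain e where e: "e \<noteq> 0" "h2 (perp h1 e) e = 0"
    by blast
  show thesis
  proof (rule that[OF e(1) h1.perp_nonzero[OF e(1)]])
    show "h1 e (perp h1 e) = 0"
      using h1.perp_orth h1.orth_sym by blast
    show "h2 e (perp h1 e) = 0"
      using e(2) h2.orth_sym by blast
  qed
qed

lemma (in hermitian_form) balance_orthogonal_basis:
  assumes ps: "proj_sum_scalar n v b h" and e: "e \<noteq> 0" and f: "f \<noteq> 0" and ef: "h e f = 0"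
    and v: "\<forall>i<n. v i = \<alpha> i *s e + \<beta> i *s f"
  shows "(\<Sum>i<n. b i * ((cmod (\<alpha> i))\<^sup>2 - Re (h f f) / Re (h e e) * (cmod (\<beta> i))\<^sup>2)
                     / ((cmod (\<alpha> i))\<^sup>2 + Re (h f f) / Re (h e e) * (cmod (\<beta> i))\<^sup>2)) = 0"
proof -
  define A where "A = Re (h e e)"
  define B where "B = Re (h f f)"
  have A: "0 < A" "h e e = of_real A"
    using self_pos[OF e] self_real by (simp_all add: A_def)
  have B: "0 < B" "h f f = of_real B"
    using self_pos[OF f] self_real by (simp_all add: B_def)
  have fe: "h f e = 0"
    using ef orth_sym by blast
  have ve: "(cmod (h (v i) e))\<^sup>2 / A = (cmod (\<alpha> i))\<^sup>2 * A" if "i < n" for i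
    using v that A fe by (simp add: add_left smult_left norm_mult power_mult_distrib power2_eq_square)
  have vf: "(cmod (h (v i) f))\<^sup>2 / B = (cmod (\<beta> i))\<^sup>2 * B" if "i < n" for i
    using v that B ef by (simp add: add_left smult_left norm_mult power_mult_distrib power2_eq_square)
  have vv: "Re (h (v i) (v i)) = (cmod (\<alpha> i))\<^sup>2 * A + (cmod (\<beta> i))\<^sup>2 * B" if "i < n" for i
    using parseval[OF e f ef, of "v i"] ve[OF that] vf[OF that] by (simp add: A_def B_def)
  have "(\<Sum>i<n. b i * ((cmod (h (v i) e))\<^sup>2 / Re (h e e) - (cmod (h (v i) f))\<^sup>2 / Re (h f f))
            / Re (h (v i) (v i)))
      = (\<Sum>i<n. b i * ((cmod (\<alpha> i))\<^sup>2 * A - (cmod (\<beta> i))\<^sup>2 * B)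
                 / ((cmod (\<alpha> i))\<^sup>2 * A + (cmod (\<beta> i))\<^sup>2 * B))"
    by (rule sum.cong) (simp_all add: ve vf vv flip: A_def B_def)
  with proj_sum_scalar_balance[OF ps e f]
  have "(\<Sum>i<n. b i * ((cmod (\<alpha> i))\<^sup>2 * A - (cmod (\<beta> i))\<^sup>2 * B)
                 / ((cmod (\<alpha> i))\<^sup>2 * A + (cmod (\<beta> i))\<^sup>2 * B)) = 0"
    by simp
  moreover have "b i * ((cmod (\<alpha> i))\<^sup>2 * A - (cmod (\<beta> i))\<^sup>2 * B) / ((cmod (\<alpha> i))\<^sup>2 * A + (cmod (\<beta> i))\<^sup>2 * B)
      = b i * ((cmod (\<alpha> i))\<^sup>2 - B / A * (cmod (\<beta> i))\<^sup>2) / ((cmod (\<alpha> i))\<^sup>2 + B / A * (cmod (\<beta> i))\<^sup>2)"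
    for i
  proof -
    have "(cmod (\<alpha> i))\<^sup>2 - B / A * (cmod (\<beta> i))\<^sup>2 = ((cmod (\<alpha> i))\<^sup>2 * A - (cmod (\<beta> i))\<^sup>2 * B) / A"
      "(cmod (\<alpha> i))\<^sup>2 + B / A * (cmod (\<beta> i))\<^sup>2 = ((cmod (\<alpha> i))\<^sup>2 * A + (cmod (\<beta> i))\<^sup>2 * B) / A"
      using A(1) by (simp_all add: field_simps)
    with A(1) show ?thesis
      by simp
  qed
  ultimately show ?thesis
    by (simp add: A_def B_def)
qed

lemma ratio_diff:
  fixes a c b r r' :: real
  assumes "0 < a + r * c" "0 < a + r' * c"
  shows "b * (a - r * c) / (a + r * c) - b * (a - r' * c) / (a + r' * c)
           = 2 * b * a * c * (r' - r) / ((a + r * c) * (a + r' * c))"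
  using assms by (simp add: field_simps)

lemma ratio_sum_strict_antimono:
  fixes b \<alpha> \<gamma> :: "nat \<Rightarrow> real"
  assumes coeffs: "\<forall>i<n. 0 < b i \<and> 0 \<le> \<alpha> i \<and> 0 \<le> \<gamma> i \<and> 0 < \<alpha> i + \<gamma> i"
    and i0: "i0 < n" "0 < \<alpha> i0" "0 < \<gamma> i0"
    and r: "0 < r" "r < r'"
  shows "(\<Sum>i<n. b i * (\<alpha> i - r' * \<gamma> i) / (\<alpha> i + r' * \<gamma> i))
           < (\<Sum>i<n. b i * (\<alpha> i - r * \<gamma> i) / (\<alpha> i + r * \<gamma> i))"
proof (rule sum_strict_mono_ex1)
  have r': "0 < r'"
    using r by simp
  have den_pos: "0 < \<alpha> i + s * \<gamma> i" if "i < n" "0 < s" for i s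
  proof (cases "\<alpha> i = 0")
    case True
    with coeffs that have "0 < \<gamma> i"
      by auto
    with True that show ?thesis
      by simp
  next
    case False
    with coeffs that have "0 < \<alpha> i"
      by auto
    with coeffs that show ?thesis
      by (intro add_pos_nonneg) auto
  qed
  have diff_nonneg: "0 \<le> b i * (\<alpha> i - r * \<gamma> i) / (\<alpha> i + r * \<gamma> i) - b i * (\<alpha> i - r' * \<gamma> i) / (\<alpha> i + r' * \<gamma> i)"
    if "i < n" for i
    unfolding ratio_diff[OF den_pos[OF that r(1)] den_pos[OF that r']]
    using coeffs that r den_pos[OF that r(1)] den_pos[OF that r']
    by (intro divide_nonneg_pos mult_nonneg_nonneg mult_pos_pos) auto
  then show "\<forall>i\<in>{..<n}. b i * (\<alpha> i - r' * \<gamma> i) / (\<alpha> i + r' * \<gamma> i) \<le> b i * (\<alpha> i - r * \<gamma> i) / (\<alpha> i + r * \<gamma> i)"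
    by auto
  have "0 < b i0 * (\<alpha> i0 - r * \<gamma> i0) / (\<alpha> i0 + r * \<gamma> i0) - b i0 * (\<alpha> i0 - r' * \<gamma> i0) / (\<alpha> i0 + r' * \<gamma> i0)"
    unfolding ratio_diff[OF den_pos[OF i0(1) r(1)] den_pos[OF i0(1) r']]
    using coeffs i0 r den_pos[OF i0(1) r(1)] den_pos[OF i0(1) r']
    by simp
  with i0(1)
  show "\<exists>i\<in>{..<n}. b i * (\<alpha> i - r' * \<gamma> i) / (\<alpha> i + r' * \<gamma> i) < b i * (\<alpha> i - r * \<gamma> i) / (\<alpha> i + r * \<gamma> i)"
    by auto
qed simp

lemma ratio_sum_inj:
  fixes b \<alpha> \<gamma> :: "nat \<Rightarrow> real"
  assumes coeffs: "\<forall>i<n. 0 < b i \<and> 0 \<le> \<alpha> i \<and> 0 \<le> \<gamma> i \<and> 0 < \<alpha> i + \<gamma> i"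
    and i0: "i0 < n" "0 < \<alpha> i0" "0 < \<gamma> i0"
    and "0 < s" "0 < t"
    and eq: "(\<Sum>i<n. b i * (\<alpha> i - s * \<gamma> i) / (\<alpha> i + s * \<gamma> i))
           = (\<Sum>i<n. b i * (\<alpha> i - t * \<gamma> i) / (\<alpha> i + t * \<gamma> i))"
  shows "s = t"
  using ratio_sum_strict_antimono[OF coeffs i0 \<open>0 < s\<close>, of t] ratio_sum_strict_antimono[OF coeffs i0 \<open>0 < t\<close>, of s] eq
  by (cases s t rule: linorder_cases) auto

lemma distinct_lines_obtain_mixed:
  assumes dl: "distinct_lines n v" and "3 \<le> n" and v: "\<forall>i<n. v i = \<alpha> i *s e + \<beta> i *s f"
  obtains i where "i < n" "\<alpha> i \<noteq> 0" "\<beta> i \<noteq> 0"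
proof -
  have not_both: False if "i < n" "k < n" "i \<noteq> k" "\<alpha> i = 0 \<and> \<alpha> k = 0 \<or> \<beta> i = 0 \<and> \<beta> k = 0" for i k
    using that(4)
  proof
    assume "\<alpha> i = 0 \<and> \<alpha> k = 0"
    with v that(1,2) have "v i = \<beta> i *s f" "v k = \<beta> k *s f"
      by auto
    with dl that(1-3) show False
      by (rule distinct_lines_not_collinear)
  next
    assume "\<beta> i = 0 \<and> \<beta> k = 0"
    with v that(1,2) have "v i = \<alpha> i *s e" "v k = \<alpha> k *s e"
      by auto
    with dl that(1-3) show False
      by (rule distinct_lines_not_collinear)
  qed
  have n: "0 < n" "1 < n" "2 < n"
    using \<open>3 \<le> n\<close> by auto
  have "\<not> (\<alpha> 0 = 0 \<and> \<alpha> 1 = 0 \<or> \<beta> 0 = 0 \<and> \<beta> 1 = 0)"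
    "\<not> (\<alpha> 0 = 0 \<and> \<alpha> 2 = 0 \<or> \<beta> 0 = 0 \<and> \<beta> 2 = 0)"
    "\<not> (\<alpha> 1 = 0 \<and> \<alpha> 2 = 0 \<or> \<beta> 1 = 0 \<and> \<beta> 2 = 0)"
    using not_both[of 0 1] not_both[of 0 2] not_both[of 1 2] n by auto
  with n that show thesis
    by blast
qed

lemma proportional_of_common_orthogonal_basis:
  assumes h1: "herm_ip h1" and h2: "herm_ip h2"
    and ef: "e \<noteq> 0" "f \<noteq> 0" "h1 e f = 0" "h2 e f = 0"
    and ratio: "Re (h1 f f) / Re (h1 e e) = Re (h2 f f) / Re (h2 e e)"
  shows "\<exists>r>0. \<forall>x y. h2 x y = of_real r * h1 x y"
proof -
  interpret h1: hermitian_form h1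
    using h1 by unfold_locales
  interpret h2: hermitian_form h2
    using h2 by unfold_locales
  define r where "r = Re (h2 e e) / Re (h1 e e)"
  have r_pos: "0 < r"
    using h1.self_pos h2.self_pos ef by (simp add: r_def)
  have ee: "h2 e e = of_real r * h1 e e"
  proof -
    have "Re (h2 e e) = r * Re (h1 e e)"
      using h1.self_pos[OF ef(1)] by (simp add: r_def)
    then show ?thesis
      by (subst h1.self_real, subst h2.self_real) simp
  qed
  have ff: "h2 f f = of_real r * h1 f f"
  proof -
    have "Re (h2 f f) = r * Re (h1 f f)"
      using ratio h1.self_pos[OF ef(1)] h2.self_pos[OF ef(1)] by (simp add: r_def field_simps)
    then show ?thesis
      by (subst h1.self_real, subst h2.self_real) simp
  qed
  have "h2 x y = of_real r * h1 x y" for x y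
  proof -
    define \<alpha> \<beta> where "\<alpha> z = h1 z e / h1 e e" and "\<beta> z = h1 z f / h1 f f" for z
    have coords: "z = \<alpha> z *s e + \<beta> z *s f" for z
      using h1.orth_decomposition[OF ef(1-3)] by (simp add: line_proj_def \<alpha>_def \<beta>_def)
    have "h2 x y = h2 (\<alpha> x *s e + \<beta> x *s f) (\<alpha> y *s e + \<beta> y *s f)"
      using coords by metis
    also have "\<dots> = of_real r * h1 (\<alpha> x *s e + \<beta> x *s f) (\<alpha> y *s e + \<beta> y *s f)"
      by (simp add: h1.diagonal_expansion[OF ef(3)] h2.diagonal_expansion[OF ef(4)] ee ff algebra_simps)
    also have "\<dots> = of_real r * h1 x y"
      using coords by metis
    finally show ?thesis .
  qed
  with r_pos show ?thesis
    by blast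
qed

lemma proj_sum_scalar_unique:
  assumes h1: "herm_ip h1" and h2: "herm_ip h2"
    and ps1: "proj_sum_scalar n v b h1" and ps2: "proj_sum_scalar n v b h2"
    and dl: "distinct_lines n v" and "3 \<le> n" and b: "\<forall>i<n. 0 < b i"
  shows "\<exists>r>0. \<forall>x y. h2 x y = of_real r * h1 x y"
proof -
  interpret h1: hermitian_form h1
    using h1 by unfold_locales
  interpret h2: hermitian_form h2
    using h2 by unfold_locales
  obtain e f where ef: "e \<noteq> 0" "f \<noteq> 0" "h1 e f = 0" "h2 e f = 0"
    using common_orthogonal_pair[OF h1 h2] .
  define \<alpha> \<beta> where "\<alpha> i = h1 (v i) e / h1 e e" and "\<beta> i = h1 (v i) f / h1 f f" for i
  have v: "\<forall>i<n. v i = \<alpha> i *s e + \<beta> i *s f"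
    using h1.orth_decomposition[OF ef(1-3)] by (simp add: line_proj_def \<alpha>_def \<beta>_def)
  obtain i0 where i0: "i0 < n" "\<alpha> i0 \<noteq> 0" "\<beta> i0 \<noteq> 0"
    using distinct_lines_obtain_mixed[OF dl \<open>3 \<le> n\<close> v] .
  have coeffs: "\<forall>i<n. 0 < b i \<and> 0 \<le> (cmod (\<alpha> i))\<^sup>2 \<and> 0 \<le> (cmod (\<beta> i))\<^sup>2
      \<and> 0 < (cmod (\<alpha> i))\<^sup>2 + (cmod (\<beta> i))\<^sup>2"
  proof (intro allI impI conjI)
    fix i
    assume "i < n"
    then have "\<alpha> i \<noteq> 0 \<or> \<beta> i \<noteq> 0"
      using v distinct_lines_nonzero[OF dl] by force
    then show "0 < (cmod (\<alpha> i))\<^sup>2 + (cmod (\<beta> i))\<^sup>2"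
      by (auto simp: add_pos_nonneg add_nonneg_pos)
  qed (use b in auto)
  have "Re (h1 f f) / Re (h1 e e) = Re (h2 f f) / Re (h2 e e)"
    by (rule ratio_sum_inj[OF coeffs, of i0])
      (use i0 h1.self_pos h2.self_pos ef h1.balance_orthogonal_basis[OF ps1 ef(1,2,3) v]
        h2.balance_orthogonal_basis[OF ps2 ef(1,2,4) v] in simp_all)
  then show ?thesis
    by (rule proportional_of_common_orthogonal_basis[OF h1 h2 ef])
qed

section \<open>Existence via hyperbolic 3-space\<close>

definition hyp_time :: "real^3 \<Rightarrow> real" where
  "hyp_time x = sqrt (1 + x \<bullet> x)"

text \<open>The matrix \<open>[[t + x3, x1 + i x2], [x1 - i x2, t - x3]]\<close> with \<open>t = hyp_time x\<close> is positive definite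
  of determinant \<open>t^2 - |x|^2 = 1\<close>; this is the hyperboloid model of hyperbolic 3-space.\<close>
definition hyp_form :: "real^3 \<Rightarrow> complex^2 \<Rightarrow> complex^2 \<Rightarrow> complex" where
  "hyp_form x y z =
     cnj (z$1) * (of_real (hyp_time x + x$3) * y$1 + Complex (x$1) (x$2) * y$2) +
     cnj (z$2) * (cnj (Complex (x$1) (x$2)) * y$1 + of_real (hyp_time x - x$3) * y$2)"

definition hopf :: "complex^2 \<Rightarrow> real^3" where
  "hopf p = vector [2 * Re (p$1 * cnj (p$2)), 2 * Im (p$1 * cnj (p$2)), (cmod (p$1))\<^sup>2 - (cmod (p$2))\<^sup>2]"

text \<open>\<open>hopf_dir p\<close> is the image of the line \<open>C p\<close> under the Hopf map to the unit sphere.\<close>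
definition hopf_dir :: "complex^2 \<Rightarrow> real^3" where
  "hopf_dir p = hopf p /\<^sub>R (norm p)\<^sup>2"

definition hyp_quad :: "complex^2 \<Rightarrow> real^3 \<Rightarrow> real" where
  "hyp_quad p x = (norm p)\<^sup>2 * hyp_time x + x \<bullet> hopf p"

definition hyp_energy :: "nat \<Rightarrow> (nat \<Rightarrow> complex^2) \<Rightarrow> (nat \<Rightarrow> real) \<Rightarrow> real^3 \<Rightarrow> real" where
  "hyp_energy n v b x = (\<Sum>i<n. b i * ln (hyp_quad (v i) x))"

lemma inner_vec3: "(x::real^3) \<bullet> y = x$1 * y$1 + x$2 * y$2 + x$3 * y$3"
  by (simp add: inner_vec_def sum_3)

lemma norm_vec2_sq: "(norm (p::complex^2))\<^sup>2 = (cmod (p$1))\<^sup>2 + (cmod (p$2))\<^sup>2"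
  by (simp add: norm_vec_def L2_set_def sum_2)

lemma hyp_time_sq: "(hyp_time x)\<^sup>2 = 1 + (norm x)\<^sup>2"
  by (simp add: hyp_time_def power2_norm_eq_inner)

lemma one_le_hyp_time: "1 \<le> hyp_time x"
  by (simp add: hyp_time_def)

lemma norm_lt_hyp_time: "norm x < hyp_time x"
  unfolding hyp_time_def by (rule real_less_rsqrt) (simp add: power2_norm_eq_inner)

lemma hyp_time_det: "(hyp_time x + x$3) * (hyp_time x - x$3) - ((x$1)\<^sup>2 + (x$2)\<^sup>2) = 1"
  using hyp_time_sq[of x, unfolded power2_norm_eq_inner inner_vec3] by (simp add: algebra_simps power2_eq_square)

lemma hyp_form_self: "hyp_form x p p = of_real (hyp_quad p x)"
  unfolding hyp_form_def hyp_quad_def norm_vec2_sq hopf_def inner_vec3 cmod_power2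
  by (simp add: complex_eq_iff algebra_simps power2_eq_square)

lemma inner_hopf:
  "hopf p \<bullet> hopf r = (norm p)\<^sup>2 * (norm r)\<^sup>2 - 2 * (cmod (p$1 * r$2 - p$2 * r$1))\<^sup>2"
  unfolding hopf_def inner_vec3 norm_vec2_sq cmod_power2
  by (simp add: algebra_simps power2_eq_square)

lemma norm_hopf: "norm (hopf p) = (norm p)\<^sup>2"
proof -
  have "(norm (hopf p))\<^sup>2 = hopf p \<bullet> hopf p"
    by (rule power2_norm_eq_inner)
  also have "\<dots> = ((norm p)\<^sup>2)\<^sup>2"
    by (simp add: inner_hopf mult.commute power2_eq_square)
  finally show ?thesis
    by (rule power2_eq_imp_eq) simp_all
qed

lemma hyp_quad_ge: "(norm p)\<^sup>2 * (hyp_time x - norm x) \<le> hyp_quad p x"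
proof -
  have "- (norm x * (norm p)\<^sup>2) \<le> x \<bullet> hopf p"
    using Cauchy_Schwarz_ineq2[of x "hopf p"] by (simp add: norm_hopf abs_le_iff)
  then show ?thesis
    by (simp add: hyp_quad_def algebra_simps)
qed

lemma hyp_quad_pos:
  assumes "p \<noteq> 0"
  shows "0 < hyp_quad p x"
proof -
  have "0 < (norm p)\<^sup>2 * (hyp_time x - norm x)"
    using assms norm_lt_hyp_time[of x] by simp
  with hyp_quad_ge[of p x] show ?thesis
    by linarith
qed

lemma hyp_quad_ge_half: "(norm p)\<^sup>2 / (2 * hyp_time x) \<le> hyp_quad p x"
proof -
  define t where "t = hyp_time x"
  have t: "0 < t" "norm x < t"
    using one_le_hyp_time[of x] norm_lt_hyp_time[of x] by (simp_all add: t_def)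
  have "(t - norm x) * (t + norm x) = 1"
    using hyp_time_sq[of x] by (simp add: t_def algebra_simps power2_eq_square)
  moreover have tx: "0 < t + norm x"
    using t norm_ge_zero[of x] by linarith
  ultimately have "t - norm x = 1 / (t + norm x)"
    by (simp add: eq_divide_eq)
  also have "\<dots> \<ge> 1 / (2 * t)"
    using t tx by (intro divide_left_mono) (auto intro: mult_pos_pos)
  finally have "(norm p)\<^sup>2 * (1 / (2 * t)) \<le> (norm p)\<^sup>2 * (t - norm x)"
    by (rule mult_left_mono) simp
  with hyp_quad_ge[of p x] show ?thesis
    by (simp add: t_def)
qed

lemma herm_ip_hyp_form: "herm_ip (hyp_form x)"
  unfolding herm_ip_def
proof (intro conjI allI impI)
  fix y z w :: "complex^2"
  show "hyp_form x (y + z) w = hyp_form x y w + hyp_form x z w"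
    by (simp add: hyp_form_def algebra_simps)
next
  fix c :: complex and y z :: "complex^2"
  show "hyp_form x (c *s y) z = c * hyp_form x y z"
    by (simp add: hyp_form_def algebra_simps)
next
  fix y z :: "complex^2"
  show "hyp_form x z y = cnj (hyp_form x y z)"
    by (simp add: hyp_form_def algebra_simps)
next
  fix y :: "complex^2"
  assume "y \<noteq> 0"
  then show "0 < Re (hyp_form x y y)"
    by (simp add: hyp_form_self hyp_quad_pos)
qed

lemma hyp_quad_hopf_dir: "p \<noteq> 0 \<Longrightarrow> hyp_quad p x = (norm p)\<^sup>2 * (hyp_time x + x \<bullet> hopf_dir p)"
  by (simp add: hyp_quad_def hopf_dir_def algebra_simps)

lemma collinear_if_det_eq_0:
  fixes p r :: "complex^2"
  assumes "p \<noteq> 0" and det: "p$1 * r$2 - p$2 * r$1 = 0"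
  shows "\<exists>c. r = c *s p"
proof (cases "p$1 = 0")
  case True
  with assms have "p$2 \<noteq> 0" "r$1 = 0"
    by (auto simp: vec_eq_iff forall_2)
  with True have "r = (r$2 / p$2) *s p"
    by (simp add: vec_eq_iff forall_2)
  then show ?thesis ..
next
  case False
  with det have "r = (r$1 / p$1) *s p"
    by (auto simp: vec_eq_iff forall_2 field_simps)
  then show ?thesis ..
qed

lemma norm_hopf_dir: "p \<noteq> 0 \<Longrightarrow> norm (hopf_dir p) = 1"
  by (simp add: hopf_dir_def norm_hopf)

lemma norm_hopf_dir_add_lt_2:
  assumes p: "p \<noteq> 0" and r: "r \<noteq> 0" and "\<forall>c. r \<noteq> c *s p"
  shows "norm (hopf_dir p + hopf_dir r) < 2"
proof -
  define D where "D = cmod (p$1 * r$2 - p$2 * r$1)"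
  have "0 < D"
    using collinear_if_det_eq_0[OF p] assms(3) by (auto simp: D_def)
  have self: "hopf_dir q \<bullet> hopf_dir q = 1" if "q \<noteq> 0" for q
    using norm_hopf_dir[OF that] by (simp flip: power2_norm_eq_inner)
  have cross: "hopf_dir p \<bullet> hopf_dir r = 1 - 2 * D\<^sup>2 / ((norm p)\<^sup>2 * (norm r)\<^sup>2)"
    using p r by (simp add: hopf_dir_def inner_hopf D_def field_simps)
  have "(norm (hopf_dir p + hopf_dir r))\<^sup>2
      = hopf_dir p \<bullet> hopf_dir p + 2 * (hopf_dir p \<bullet> hopf_dir r) + hopf_dir r \<bullet> hopf_dir r"
    by (simp add: power2_norm_eq_inner inner_add_left inner_add_right inner_commute)
  also have "\<dots> = 4 - 4 * D\<^sup>2 / ((norm p)\<^sup>2 * (norm r)\<^sup>2)"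
    using self[OF p] self[OF r] cross by simp
  also have "\<dots> < 2\<^sup>2"
    using \<open>0 < D\<close> p r by simp
  finally show ?thesis
    by (rule power2_less_imp_less) simp
qed

lemma hyp_quad_pair_large:
  assumes "p \<noteq> 0" "r \<noteq> 0" and \<eta>: "2 * \<eta> \<le> 2 - norm (hopf_dir p + hopf_dir r)"
  shows "\<eta> * hyp_time x \<le> hyp_quad p x / (norm p)\<^sup>2 \<or> \<eta> * hyp_time x \<le> hyp_quad r x / (norm r)\<^sup>2"
proof -
  define u where "u = hopf_dir p + hopf_dir r"
  have "hyp_quad p x / (norm p)\<^sup>2 + hyp_quad r x / (norm r)\<^sup>2 = 2 * hyp_time x + x \<bullet> u"
    using assms by (simp add: hyp_quad_hopf_dir u_def inner_add_right)
  moreover have "- (norm x * norm u) \<le> x \<bullet> u"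
    using Cauchy_Schwarz_ineq2[of x u] by (simp add: abs_le_iff)
  moreover have "norm x * norm u \<le> hyp_time x * norm u"
    using norm_lt_hyp_time[of x] by (simp add: mult_right_mono)
  moreover have "2 * \<eta> * hyp_time x \<le> (2 - norm u) * hyp_time x"
    using \<eta> one_le_hyp_time[of x] by (simp add: u_def mult_right_mono)
  ultimately have "2 * \<eta> * hyp_time x \<le> hyp_quad p x / (norm p)\<^sup>2 + hyp_quad r x / (norm r)\<^sup>2"
    by (simp add: algebra_simps)
  then show ?thesis
    by linarith
qed

lemma ln_ge_of_ratio_ge:
  fixes N s q :: real
  assumes "0 < N" "0 < s" "s \<le> q / N"
  shows "ln N + ln s \<le> ln q"
proof -
  have "N * s \<le> q"
    using assms by (simp add: field_simps)
  have "ln N + ln s = ln (N * s)"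
    using assms by (simp add: ln_mult)
  also have "\<dots> \<le> ln q"
    using \<open>N * s \<le> q\<close> assms by (intro ln_mono) auto
  finally show ?thesis .
qed

lemma ln_hyp_quad_ge:
  assumes "p \<noteq> 0"
  shows "ln ((norm p)\<^sup>2) - ln 2 - ln (hyp_time x) \<le> ln (hyp_quad p x)"
proof -
  have t: "0 < hyp_time x"
    using one_le_hyp_time[of x] by simp
  have "1 / (2 * hyp_time x) \<le> hyp_quad p x / (norm p)\<^sup>2"
    using hyp_quad_ge_half[of p x] assms by (simp add: field_simps)
  then have "ln ((norm p)\<^sup>2) + ln (1 / (2 * hyp_time x)) \<le> ln (hyp_quad p x)"
    using assms t by (intro ln_ge_of_ratio_ge) auto
  then show ?thesis
    using t by (simp add: ln_div ln_mult)
qed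

lemma ln_hyp_quad_ge_if_large:
  assumes "p \<noteq> 0" "0 < \<eta>" "\<eta> * hyp_time x \<le> hyp_quad p x / (norm p)\<^sup>2"
  shows "ln ((norm p)\<^sup>2) + ln \<eta> + ln (hyp_time x) \<le> ln (hyp_quad p x)"
proof -
  have t: "0 < hyp_time x"
    using one_le_hyp_time[of x] by simp
  have "ln ((norm p)\<^sup>2) + ln (\<eta> * hyp_time x) \<le> ln (hyp_quad p x)"
    using assms t by (intro ln_ge_of_ratio_ge) auto
  then show ?thesis
    using assms(2) t by (simp add: ln_mult)
qed

lemma hopf_dir_separation:
  assumes dl: "distinct_lines n v"
  obtains \<eta> where "0 < \<eta>"
    "\<And>i k. i < n \<Longrightarrow> k < n \<Longrightarrow> i \<noteq> k \<Longrightarrow> 2 * \<eta> \<le> 2 - norm (hopf_dir (v i) + hopf_dir (v k))"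
proof -
  define gaps where
    "gaps = (\<lambda>(i, k). (2 - norm (hopf_dir (v i) + hopf_dir (v k))) / 2) ` {(i, k). i < n \<and> k < n \<and> i \<noteq> k}"
  have "finite gaps"
    unfolding gaps_def by (rule finite_imageI, rule finite_subset[of _ "{..<n} \<times> {..<n}"]) auto
  moreover have "\<forall>g\<in>gaps. 0 < g"
    using norm_hopf_dir_add_lt_2 dl by (auto simp: gaps_def distinct_lines_def)
  ultimately have "0 < Min (insert 1 gaps)" "\<And>g. g \<in> gaps \<Longrightarrow> Min (insert 1 gaps) \<le> g"
    by simp_all
  then show thesis
    by (intro that[of "Min (insert 1 gaps)"]) (force simp: gaps_def)+
qed

lemma sum_lower_bound_one_exception:
  fixes b k l :: "nat \<Rightarrow> real"
  assumes b: "\<forall>i<n. 0 \<le> b i" and "0 \<le> T"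
    and always: "\<forall>i<n. k i - T \<le> l i"
    and except: "\<forall>i<n. \<forall>j<n. i \<noteq> j \<longrightarrow> k i + T \<le> l i \<or> k j + T \<le> l j"
    and m_total: "m \<le> (\<Sum>i<n. b i)"
    and m_others: "\<forall>j<n. m \<le> (\<Sum>i\<in>{..<n} - {j}. b i) - b j"
  shows "(\<Sum>i<n. b i * k i) + m * T \<le> (\<Sum>i<n. b i * l i)"
proof (cases "\<forall>i<n. k i + T \<le> l i")
  case True
  have "(\<Sum>i<n. b i * k i) + m * T \<le> (\<Sum>i<n. b i * k i) + (\<Sum>i<n. b i) * T"
    using m_total \<open>0 \<le> T\<close> by (simp add: mult_right_mono)
  also have "\<dots> = (\<Sum>i<n. b i * (k i + T))"
    by (simp add: distrib_left sum.distrib sum_distrib_right)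
  also have "\<dots> \<le> (\<Sum>i<n. b i * l i)"
    using True b by (auto intro!: sum_mono mult_left_mono)
  finally show ?thesis .
next
  case False
  then obtain j where j: "j < n" "l j < k j + T"
    by (auto simp: not_le)
  have others: "k i + T \<le> l i" if "i \<in> {..<n} - {j}" for i
    using except j that by force
  have "(\<Sum>i<n. b i * k i) + m * T \<le> (\<Sum>i<n. b i * k i) + ((\<Sum>i\<in>{..<n} - {j}. b i) - b j) * T"
    using m_others j \<open>0 \<le> T\<close> by (simp add: mult_right_mono)
  also have "\<dots> = b j * (k j - T) + (\<Sum>i\<in>{..<n} - {j}. b i * (k i + T))"
    using j by (simp add: sum.remove distrib_left sum.distrib sum_distrib_left sum_distrib_right algebra_simps)
  also have "\<dots> \<le> b j * l j + (\<Sum>i\<in>{..<n} - {j}. b i * l i)"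
    using always others b j by (intro add_mono mult_left_mono sum_mono) auto
  also have "\<dots> = (\<Sum>i<n. b i * l i)"
    using j by (simp add: sum.remove)
  finally show ?thesis .
qed

text \<open>The points \<open>hopf_dir (v i)\<close> of the sphere are pairwise distinct, so for every \<open>x\<close> at most one
  \<open>hyp_quad (v i) x\<close> is small compared with \<open>hyp_time x\<close>; all others grow like \<open>hyp_time x\<close>.
  The strict inequalities make the total weight of the growing terms dominate.\<close>
lemma hyp_energy_lower_bound:
  assumes dl: "distinct_lines n v" and "0 < n" and b: "\<forall>i<n. 0 < b i"
    and ineq: "\<forall>j<n. b j < (\<Sum>i\<in>{..<n} - {j}. b i)"
  obtains K m where "0 < m" "\<And>x. K + m * ln (hyp_time x) \<le> hyp_energy n v b x"
proof -
  obtain \<eta> where \<eta>: "0 < \<eta>"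
    "\<And>i k. i < n \<Longrightarrow> k < n \<Longrightarrow> i \<noteq> k \<Longrightarrow> 2 * \<eta> \<le> 2 - norm (hopf_dir (v i) + hopf_dir (v k))"
    using hopf_dir_separation[OF dl] by blast
  define c where "c = min (- ln 2) (ln \<eta>)"
  define m where "m = Min (insert (\<Sum>i<n. b i) ((\<lambda>j. (\<Sum>i\<in>{..<n} - {j}. b i) - b j) ` {..<n}))"
  have "0 < (\<Sum>i<n. b i)"
    using b \<open>0 < n\<close> by (intro sum_pos) auto
  with ineq have m_pos: "0 < m"
    by (simp add: m_def)
  define K where "K = (\<Sum>i<n. b i * (ln ((norm (v i))\<^sup>2) + c))"
  have "K + m * ln (hyp_time x) \<le> hyp_energy n v b x" for x
  proof -
    define t where "t = hyp_time x"
    have nz: "v i \<noteq> 0" if "i < n" for i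
      using dl that by (rule distinct_lines_nonzero)
    have always: "ln ((norm (v i))\<^sup>2) + c - ln t \<le> ln (hyp_quad (v i) x)" if "i < n" for i
      using ln_hyp_quad_ge[OF nz[OF that], of x] by (simp add: c_def t_def)
    have except: "ln ((norm (v i))\<^sup>2) + c + ln t \<le> ln (hyp_quad (v i) x)
        \<or> ln ((norm (v k))\<^sup>2) + c + ln t \<le> ln (hyp_quad (v k) x)"
      if "i < n" "k < n" "i \<noteq> k" for i k
      using hyp_quad_pair_large[OF nz[OF that(1)] nz[OF that(2)] \<eta>(2)[OF that], of x]
        ln_hyp_quad_ge_if_large[OF nz[OF that(1)] \<eta>(1), of x] ln_hyp_quad_ge_if_large[OF nz[OF that(2)] \<eta>(1), of x]
      by (auto simp: c_def t_def)
    have "0 \<le> ln t"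
      using one_le_hyp_time[of x] by (simp add: t_def)
    then have "K + m * ln t \<le> (\<Sum>i<n. b i * ln (hyp_quad (v i) x))"
      unfolding K_def
      by (intro sum_lower_bound_one_exception) (use b always except in \<open>auto simp: m_def less_imp_le\<close>)
    then show ?thesis
      by (simp add: hyp_energy_def t_def)
  qed
  with m_pos show thesis
    by (rule that)
qed

lemma continuous_on_hyp_quad: "continuous_on S (hyp_quad p)"
  unfolding hyp_quad_def [abs_def] hyp_time_def by (intro continuous_intros)

lemma continuous_on_hyp_energy:
  assumes "\<forall>i<n. v i \<noteq> 0"
  shows "continuous_on S (hyp_energy n v b)"
  unfolding hyp_energy_def [abs_def]
  by (intro continuous_intros continuous_on_hyp_quad)
    (use assms in \<open>auto simp: hyp_quad_pos[THEN less_imp_not_eq2]\<close>)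

lemma hyp_energy_attains_min:
  assumes nz: "\<forall>i<n. v i \<noteq> 0" and "0 < m" and bound: "\<And>x. K + m * ln (hyp_time x) \<le> hyp_energy n v b x"
  obtains x0 where "\<And>y. hyp_energy n v b x0 \<le> hyp_energy n v b y"
proof -
  define F where "F = hyp_energy n v b"
  define R where "R = exp ((F 0 - K + 1) / m)"
  have "0 < R"
    by (simp add: R_def)
  then have "cball 0 R \<noteq> {}"
    by simp
  then obtain x0 where x0: "x0 \<in> cball 0 R" "\<forall>y\<in>cball 0 R. F x0 \<le> F y"
    using continuous_attains_inf[OF compact_cball _ continuous_on_hyp_energy[OF nz]]
    unfolding F_def by blast
  have "F x0 \<le> F y" for y
  proof (cases "y \<in> cball 0 R")
    case False
    then have "R < hyp_time y"
      using norm_lt_hyp_time[of y] by simp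
    then have "ln R < ln (hyp_time y)"
      using \<open>0 < R\<close> by simp
    then have "(F 0 - K + 1) / m < ln (hyp_time y)"
      by (simp add: R_def)
    then have "F 0 - K + 1 < m * ln (hyp_time y)"
      using \<open>0 < m\<close> by (simp add: field_simps)
    with bound[of y] have "F 0 < F y"
      by (simp add: F_def)
    moreover have "F x0 \<le> F 0"
      using x0 \<open>0 < R\<close> by simp
    ultimately show ?thesis
      by simp
  qed (use x0 in blast)
  then show thesis
    by (rule that[unfolded F_def[symmetric]])
qed

lemma has_derivative_hyp_quad:
  "(hyp_quad p has_derivative (\<lambda>y. (norm p)\<^sup>2 * (x \<bullet> y) / hyp_time x + y \<bullet> hopf p)) (at x)"
  unfolding hyp_quad_def [abs_def] hyp_time_def
  by (rule has_derivative_eq_rhs, (rule derivative_eq_intros refl | simp add: add_pos_nonneg)+)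
    (auto simp: fun_eq_iff inner_commute field_simps)

lemma hyp_energy_min_gradient:
  assumes nz: "\<forall>i<n. v i \<noteq> 0" and min: "\<And>y. hyp_energy n v b x \<le> hyp_energy n v b y"
  shows "(\<Sum>i<n. (b i / hyp_quad (v i) x) *\<^sub>R (((norm (v i))\<^sup>2 / hyp_time x) *\<^sub>R x + hopf (v i))) = 0"
    (is "?G = 0")
proof -
  have "(hyp_energy n v b has_derivative (\<lambda>y. \<Sum>i<n. b i * (((norm (v i))\<^sup>2 * (x \<bullet> y) / hyp_time x
          + y \<bullet> hopf (v i)) * inverse (hyp_quad (v i) x)))) (at x)"
    unfolding hyp_energy_def [abs_def]
    by (intro has_derivative_sum has_derivative_mult_right has_derivative_ln has_derivative_hyp_quad)
      (use nz hyp_quad_pos in auto)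
  moreover have "(\<lambda>y. \<Sum>i<n. b i * (((norm (v i))\<^sup>2 * (x \<bullet> y) / hyp_time x
          + y \<bullet> hopf (v i)) * inverse (hyp_quad (v i) x))) = (\<lambda>y. ?G \<bullet> y)"
    by (auto simp: fun_eq_iff inner_sum_left inner_sum_right inner_add_left inner_add_right inner_commute
        divide_inverse algebra_simps intro!: sum.cong)
  ultimately have "(hyp_energy n v b has_derivative (\<lambda>y. ?G \<bullet> y)) (at x)"
    by simp
  then have "(\<lambda>y. ?G \<bullet> y) = (\<lambda>y. 0)"
    by (rule has_derivative_local_min) (simp add: min)
  then have "?G \<bullet> ?G = 0"
    by metis
  then show ?thesis
    by simp
qed

definition moment :: "nat \<Rightarrow> (nat \<Rightarrow> complex^2) \<Rightarrow> (nat \<Rightarrow> real) \<Rightarrow> 2 \<Rightarrow> 2 \<Rightarrow> complex" where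
  "moment n v c k l = (\<Sum>i<n. of_real (c i) * (v i $ k * cnj (v i $ l)))"

lemma (in hermitian_form) sum_line_proj_component:
  "(\<Sum>i<n. of_real (b i) *s line_proj h (v i) y) $ k
     = moment n v (\<lambda>i. b i / Re (h (v i) (v i))) k 1 * h y (axis 1 1)
     + moment n v (\<lambda>i. b i / Re (h (v i) (v i))) k 2 * h y (axis 2 1)"
proof -
  have "(of_real (b i) *s line_proj h (v i) y) $ k
      = of_real (b i / Re (h (v i) (v i))) * (v i $ k * cnj (v i $ 1)) * h y (axis 1 1)
      + of_real (b i / Re (h (v i) (v i))) * (v i $ k * cnj (v i $ 2)) * h y (axis 2 1)" for i
    unfolding line_proj_def vector_smult_component
    by (subst self_real[of "v i"], subst expand_right[of y "v i"]) (simp add: divide_inverse algebra_simps)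
  then show ?thesis
    by (simp add: moment_def sum.distrib sum_distrib_right)
qed

text \<open>The matrix of \<open>hyp_form x\<close> has determinant 1, so its adjugate is its inverse.\<close>
lemma hyp_form_adjugate:
  fixes x :: "real^3" and y :: "complex^2"
  defines "\<beta> \<equiv> Complex (x$1) (x$2)" and "t \<equiv> hyp_time x"
  shows "of_real (t - x$3) * hyp_form x y (axis 1 1) - \<beta> * hyp_form x y (axis 2 1) = y$1"
    and "of_real (t + x$3) * hyp_form x y (axis 2 1) - cnj \<beta> * hyp_form x y (axis 1 1) = y$2"
proof -
  have det: "of_real (t - x$3) * of_real (t + x$3) - \<beta> * cnj \<beta> = 1"
    using hyp_time_det[of x] by (simp add: \<beta>_def t_def complex_eq_iff algebra_simps power2_eq_square)
  have "of_real (t - x$3) * hyp_form x y (axis 1 1) - \<beta> * hyp_form x y (axis 2 1)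
      = (of_real (t - x$3) * of_real (t + x$3) - \<beta> * cnj \<beta>) * y$1"
    "of_real (t + x$3) * hyp_form x y (axis 2 1) - cnj \<beta> * hyp_form x y (axis 1 1)
      = (of_real (t - x$3) * of_real (t + x$3) - \<beta> * cnj \<beta>) * y$2"
    by (simp_all add: hyp_form_def \<beta>_def t_def axis_def algebra_simps)
  with det show "of_real (t - x$3) * hyp_form x y (axis 1 1) - \<beta> * hyp_form x y (axis 2 1) = y$1"
    "of_real (t + x$3) * hyp_form x y (axis 2 1) - cnj \<beta> * hyp_form x y (axis 1 1) = y$2"
    by simp_all
qed

text \<open>At a critical point \<open>x\<close> of \<open>hyp_energy\<close> the matrix \<open>sum (b\<^sub>i / hyp_quad v\<^sub>i x) v\<^sub>i v\<^sub>i^*\<close> is a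
  multiple of the adjugate of the matrix of \<open>hyp_form x\<close>.\<close>
lemma hyp_critical_moments:
  assumes grad: "(\<Sum>i<n. (b i / hyp_quad (v i) x) *\<^sub>R (((norm (v i))\<^sup>2 / hyp_time x) *\<^sub>R x + hopf (v i))) = 0"
  obtains d where "moment n v (\<lambda>i. b i / hyp_quad (v i) x) 1 1 = d * of_real (hyp_time x - x$3)"
    "moment n v (\<lambda>i. b i / hyp_quad (v i) x) 2 2 = d * of_real (hyp_time x + x$3)"
    "moment n v (\<lambda>i. b i / hyp_quad (v i) x) 1 2 = - d * Complex (x$1) (x$2)"
    "moment n v (\<lambda>i. b i / hyp_quad (v i) x) 2 1 = - d * cnj (Complex (x$1) (x$2))"
proof -
  define t where "t = hyp_time x"
  define c where "c i = b i / hyp_quad (v i) x" for i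
  define S where "S = (\<Sum>i<n. c i * (norm (v i))\<^sup>2)"
  define SP where "SP = (\<Sum>i<n. c i * (cmod (v i $ 1))\<^sup>2)"
  define SQ where "SQ = (\<Sum>i<n. c i * (cmod (v i $ 2))\<^sup>2)"
  have t: "0 < t"
    using one_le_hyp_time[of x] by (simp add: t_def)
  have grad_k: "S / t * x$k + (\<Sum>i<n. c i * hopf (v i) $ k) = 0" for k
  proof -
    have "0 = (\<Sum>i<n. c i * ((norm (v i))\<^sup>2 / t * x$k + hopf (v i) $ k))"
      using arg_cong[OF grad, of "\<lambda>w. w $ k"] by (simp add: c_def t_def)
    also have "\<dots> = S / t * x$k + (\<Sum>i<n. c i * hopf (v i) $ k)"
      by (simp add: S_def algebra_simps sum.distrib sum_distrib_left sum_divide_distrib)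
    finally show ?thesis ..
  qed
  have S: "S = SP + SQ"
    by (simp add: S_def SP_def SQ_def norm_vec2_sq algebra_simps sum.distrib)
  have "(\<Sum>i<n. c i * hopf (v i) $ 3) = SP - SQ"
    by (simp add: SP_def SQ_def hopf_def algebra_simps sum_subtractf)
  with grad_k[of 3] t have diff: "t * (SP - SQ) = - S * x$3"
    by (simp add: field_simps)
  have "2 * t * SP = t * S + t * (SP - SQ)" "2 * t * SQ = t * S - t * (SP - SQ)"
    by (simp_all add: S algebra_simps)
  then have SP: "SP = S / (2 * t) * (t - x$3)" and SQ: "SQ = S / (2 * t) * (t + x$3)"
    using t by (simp_all add: diff field_simps)
  have "(\<Sum>i<n. c i * hopf (v i) $ 1) = 2 * Re (moment n v c 1 2)"
    "(\<Sum>i<n. c i * hopf (v i) $ 2) = 2 * Im (moment n v c 1 2)"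
    by (simp_all add: moment_def hopf_def Re_sum Im_sum sum_distrib_left algebra_simps)
  then have M12: "moment n v c 1 2 = - of_real (S / (2 * t)) * Complex (x$1) (x$2)"
    using grad_k[of 1] grad_k[of 2] t by (simp add: complex_eq_iff field_simps)
  have "moment n v c 1 1 = of_real SP" "moment n v c 2 2 = of_real SQ"
    unfolding moment_def SP_def SQ_def of_real_sum of_real_mult complex_norm_square by simp_all
  moreover have "moment n v c 2 1 = cnj (moment n v c 1 2)"
    by (simp add: moment_def mult.commute)
  ultimately show thesis
    using that[of "of_real (S / (2 * t))"] M12 unfolding c_def [abs_def]
    by (simp add: SP SQ t_def)
qed

lemma hyp_form_proj_sum_scalar:
  assumes grad: "(\<Sum>i<n. (b i / hyp_quad (v i) x) *\<^sub>R (((norm (v i))\<^sup>2 / hyp_time x) *\<^sub>R x + hopf (v i))) = 0"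
  shows "proj_sum_scalar n v b (hyp_form x)"
proof -
  interpret hermitian_form "hyp_form x"
    by (rule hermitian_form.intro, rule herm_ip_hyp_form)
  define c where "c = (\<lambda>i. b i / hyp_quad (v i) x)"
  obtain d where M: "moment n v c 1 1 = d * of_real (hyp_time x - x$3)"
    "moment n v c 2 2 = d * of_real (hyp_time x + x$3)"
    "moment n v c 1 2 = - d * Complex (x$1) (x$2)" "moment n v c 2 1 = - d * cnj (Complex (x$1) (x$2))"
    using hyp_critical_moments[OF grad] unfolding c_def by blast
  have comp: "(\<Sum>i<n. of_real (b i) *s line_proj (hyp_form x) (v i) y) $ k
      = moment n v c k 1 * hyp_form x y (axis 1 1) + moment n v c k 2 * hyp_form x y (axis 2 1)" for y k
    unfolding sum_line_proj_component hyp_form_self Re_complex_of_real c_def ..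
  have "(\<Sum>i<n. of_real (b i) *s line_proj (hyp_form x) (v i) y) $ 1
      = d * (of_real (hyp_time x - x$3) * hyp_form x y (axis 1 1) - Complex (x$1) (x$2) * hyp_form x y (axis 2 1))"
    "(\<Sum>i<n. of_real (b i) *s line_proj (hyp_form x) (v i) y) $ 2
      = d * (of_real (hyp_time x + x$3) * hyp_form x y (axis 2 1) - cnj (Complex (x$1) (x$2)) * hyp_form x y (axis 1 1))"
    for y
    by (simp_all only: comp M) (simp_all add: algebra_simps)
  then have "(\<Sum>i<n. of_real (b i) *s line_proj (hyp_form x) (v i) y) = d *s y" for y
    by (simp only: hyp_form_adjugate vec_eq_iff forall_2 vector_smult_component)
  then show ?thesis
    by (auto simp: proj_sum_scalar_def)
qed

lemma proj_sum_scalar_exists: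
  assumes dl: "distinct_lines n v" and "0 < n" and b: "\<forall>i<n. 0 < b i"
    and ineq: "\<forall>j<n. b j < (\<Sum>i\<in>{..<n} - {j}. b i)"
  shows "\<exists>h. herm_ip h \<and> proj_sum_scalar n v b h"
proof -
  have nz: "\<forall>i<n. v i \<noteq> 0"
    using dl distinct_lines_nonzero by blast
  obtain K m where "0 < m" "\<And>x. K + m * ln (hyp_time x) \<le> hyp_energy n v b x"
    using hyp_energy_lower_bound[OF dl \<open>0 < n\<close> b ineq] by blast
  then obtain x where "\<And>y. hyp_energy n v b x \<le> hyp_energy n v b y"
    using hyp_energy_attains_min[OF nz] by blast
  then have "proj_sum_scalar n v b (hyp_form x)"
    by (intro hyp_form_proj_sum_scalar hyp_energy_min_gradient[OF nz])
  with herm_ip_hyp_form show ?thesis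
    by blast
qed

theorem proposition4:
  fixes n :: nat and L :: "nat \<Rightarrow> (complex^2) set" and a :: "nat \<Rightarrow> real"
  assumes "n \<ge> 3"
    and "\<forall>i<n. complex_line (L i)"
    and "inj_on L {..<n}"
    and "\<forall>i<n. a i \<noteq> 0"
    and "(\<forall>i<n. a i > 0) \<or> (\<forall>i<n. a i < 0)"
  shows "((\<exists>h. dunkl_adapted n L a h) \<longleftrightarrow> (\<forall>j<n. \<bar>a j\<bar> < (\<Sum>i\<in>{..<n} - {j}. \<bar>a i\<bar>)))
       \<and> ((\<forall>j<n. \<bar>a j\<bar> < (\<Sum>i\<in>{..<n} - {j}. \<bar>a i\<bar>)) \<longrightarrow>
            (\<forall>h1 h2. dunkl_adapted n L a h1 \<and> dunkl_adapted n L a h2 \<longrightarrow>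
               (\<exists>r::real. r > 0 \<and> (\<forall>x y. h2 x y = complex_of_real r * h1 x y))))"
proof -
  obtain v where dl: "distinct_lines n v" and L: "\<forall>i<n. L i = range (\<lambda>c. c *s v i)"
    using distinct_lines_generators[OF assms(2,3)] .
  define b where "b i = \<bar>a i\<bar>" for i
  have b: "\<forall>i<n. 0 < b i"
    using assms(4) by (simp add: b_def)
  obtain \<sigma> :: real where "\<sigma> \<noteq> 0" "\<forall>i<n. b i = \<sigma> * a i"
  proof (cases "\<forall>i<n. a i > 0")
    case True
    then show thesis
      by (intro that[of 1]) (simp_all add: b_def abs_of_pos)
  next
    case False
    with assms(5) show thesis
      by (intro that[of "- 1"]) (simp_all add: b_def abs_of_neg)
  qed
  then have dunkl: "dunkl_adapted n L a h \<longleftrightarrow> herm_ip h \<and> proj_sum_scalar n v b h" for h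
    using dunkl_adapted_iff_proj_sum_scalar[of n v L] dl L proj_sum_scalar_rescale[of \<sigma> n b a]
    by (simp add: distinct_lines_nonzero)
  have "(\<exists>h. dunkl_adapted n L a h) \<longleftrightarrow> (\<forall>j<n. b j < (\<Sum>i\<in>{..<n} - {j}. b i))"
  proof
    assume "\<exists>h. dunkl_adapted n L a h"
    then obtain h where "hermitian_form h" "proj_sum_scalar n v b h"
      using dunkl hermitian_form.intro by blast
    then show "\<forall>j<n. b j < (\<Sum>i\<in>{..<n} - {j}. b i)"
      using hermitian_form.proj_sum_scalar_imp_lt_sum_others dl assms(1) b by blast
  next
    assume "\<forall>j<n. b j < (\<Sum>i\<in>{..<n} - {j}. b i)"
    then show "\<exists>h. dunkl_adapted n L a h"
      using proj_sum_scalar_exists[OF dl _ b] assms(1) dunkl by auto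
  qed
  moreover have "\<exists>r>0. \<forall>x y. h2 x y = of_real r * h1 x y"
    if "dunkl_adapted n L a h1" "dunkl_adapted n L a h2" for h1 h2
    using that dunkl proj_sum_scalar_unique[OF _ _ _ _ dl assms(1) b] by blast
  ultimately show ?thesis
    by (simp add: b_def)
qed

end
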